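(* In the setting above, let $\omega_I=-\tfrac12 dId\rho$ with $\rho=\rho(\eta_1,\eta_2)$, let $g(\xi_A,\xi_B):=\omega_I(I\xi_A,\xi_B)$, and assume $g$ is non-degenerate. Define the endomorphism $J$ of $T_X\mathcal O$ by $g(\xi_A,\xi_B)=\operatorname{Re}\,\omega_c^{\mathcal O}(J\xi_A,\xi_B)$ for all $A,B$. Then \begin{align*} J\xi_A &= -2\rho_1[X,\sigma\xi_A] + 4\rho_2\big(2[X,[\sigma X,[X,\sigma\xi_A]]]-[X,[X,[\sigma X,\sigma\xi_A]]]\big)\\ &\quad -2\rho_{11}\langle\sigma\xi_A,X\rangle[X,\sigma X]\\ &\quad +4\rho_{12}\big(\langle\sigma\xi_A,[X,[\sigma X,X]]\rangle[X,\sigma X]+\langle\sigma\xi_A,X\rangle[X,[\sigma X,[X,\sigma X]]]\big)\\ &\quad -8\rho_{22}\langle\sigma\xi_A,[X,[\sigma X,X]]\rangle[X,[\sigma X,[X,\sigma X]]]. \end{align*}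
   Context: $\mathfrak g^{\mathbb C}$ is a complex semisimple Lie algebra, $\langle\cdot,\cdot\rangle$ the negative of its Killing form, $\sigma$ a real structure with compact fixed real form $\mathfrak g$. On a nilpotent orbit $\mathcal O$, $\xi_A=[A,X]$ at $X$; tangent vectors are identified with elements of $\mathfrak g^{\mathbb C}$. $I\xi_A=\xi_{iA}$, and $I$ acts on one-forms by $(I\alpha)(Y)=-\alpha(IY)$. The Kirillov–Kostant–Souriau form is $\omega_c^{\mathcal O}(\xi_A,\xi_B)_X=\langle X,[A,B]\rangle=-\langle\xi_A,B\rangle$. The invariants are $\eta_1(X)=\langle X,\sigma X\rangle$, $\eta_2(X)=-\langle[X,\sigma X],[X,\sigma X]\rangle$, and $\rho_i=\partial\rho/\partial\eta_i$, $\rho_{ij}=\partial^2\rho/\partial\eta_i\partial\eta_j$. *)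

theory Defs
  imports "HOL-Analysis.Analysis"
begin

text \<open>The complex Lie algebra is modelled on the complex vector space complex^'n
  (with the standard basis axis i 1), with Lie bracket br.\<close>

type_synonym 'n cvec = "complex ^ 'n"

definition lie_algebra :: "('n::finite cvec \<Rightarrow> 'n cvec \<Rightarrow> 'n cvec) \<Rightarrow> bool" where
  "lie_algebra br \<longleftrightarrow>
     (\<forall>x y z. br (x + y) z = br x z + br y z) \<and>
     (\<forall>x y z. br x (y + z) = br x y + br x z) \<and>
     (\<forall>c x y. br (c *s x) y = c *s br x y) \<and>
     (\<forall>c x y. br x (c *s y) = c *s br x y) \<and>
     (\<forall>x. br x x = 0) \<and>
     (\<forall>x y z. br x (br y z) + br y (br z x) + br z (br x y) = 0)"

definition killing :: "('n::finite cvec \<Rightarrow> 'n cvec \<Rightarrow> 'n cvec) \<Rightarrow> 'n cvec \<Rightarrow> 'n cvec \<Rightarrow> complex" where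
  "killing br A B = (\<Sum>i\<in>UNIV. (br A (br B (axis i 1))) $ i)"

definition ip :: "('n::finite cvec \<Rightarrow> 'n cvec \<Rightarrow> 'n cvec) \<Rightarrow> 'n cvec \<Rightarrow> 'n cvec \<Rightarrow> complex" where
  "ip br A B = - killing br A B"

definition lie_ideal :: "('n::finite cvec \<Rightarrow> 'n cvec \<Rightarrow> 'n cvec) \<Rightarrow> 'n cvec set \<Rightarrow> bool" where
  "lie_ideal br I \<longleftrightarrow> 0 \<in> I \<and> (\<forall>x\<in>I. \<forall>y\<in>I. x + y \<in> I) \<and> (\<forall>c. \<forall>x\<in>I. c *s x \<in> I)
     \<and> (\<forall>x. \<forall>y\<in>I. br x y \<in> I)"

fun derived_series :: "('n::finite cvec \<Rightarrow> 'n cvec \<Rightarrow> 'n cvec) \<Rightarrow> 'n cvec set \<Rightarrow> nat \<Rightarrow> 'n cvec set" where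
  "derived_series br I 0 = I"
| "derived_series br I (Suc k) =
     span {br x y | x y. x \<in> derived_series br I k \<and> y \<in> derived_series br I k}"

definition solvable_ideal :: "('n::finite cvec \<Rightarrow> 'n cvec \<Rightarrow> 'n cvec) \<Rightarrow> 'n cvec set \<Rightarrow> bool" where
  "solvable_ideal br I \<longleftrightarrow> lie_ideal br I \<and> (\<exists>k. derived_series br I k = {0})"

definition semisimple :: "('n::finite cvec \<Rightarrow> 'n cvec \<Rightarrow> 'n cvec) \<Rightarrow> bool" where
  "semisimple br \<longleftrightarrow> lie_algebra br \<and> (\<forall>I. solvable_ideal br I \<longrightarrow> I = {0})"

text \<open>A real structure (conjugate-linear involutive Lie algebra automorphism) whose
  fixed real form is compact, i.e. the Killing form is negative definite on it.\<close>
definition compact_real_structure ::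
  "('n::finite cvec \<Rightarrow> 'n cvec \<Rightarrow> 'n cvec) \<Rightarrow> ('n cvec \<Rightarrow> 'n cvec) \<Rightarrow> bool" where
  "compact_real_structure br \<sigma> \<longleftrightarrow>
     (\<forall>x y. \<sigma> (x + y) = \<sigma> x + \<sigma> y) \<and>
     (\<forall>c x. \<sigma> (c *s x) = cnj c *s \<sigma> x) \<and>
     (\<forall>x. \<sigma> (\<sigma> x) = x) \<and>
     (\<forall>x y. \<sigma> (br x y) = br (\<sigma> x) (\<sigma> y)) \<and>
     (\<forall>A. \<sigma> A = A \<and> A \<noteq> 0 \<longrightarrow> Re (killing br A A) < 0)"

definition nilpotent_elt :: "('n::finite cvec \<Rightarrow> 'n cvec \<Rightarrow> 'n cvec) \<Rightarrow> 'n cvec \<Rightarrow> bool" where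
  "nilpotent_elt br X \<longleftrightarrow> (\<exists>k. (br X ^^ k) = (\<lambda>_. 0))"

text \<open>The invariants (real valued; we take real parts of the complex values).\<close>
definition eta1 :: "('n::finite cvec \<Rightarrow> 'n cvec \<Rightarrow> 'n cvec) \<Rightarrow> ('n cvec \<Rightarrow> 'n cvec) \<Rightarrow> 'n cvec \<Rightarrow> real" where
  "eta1 br \<sigma> X = Re (ip br X (\<sigma> X))"

definition eta2 :: "('n::finite cvec \<Rightarrow> 'n cvec \<Rightarrow> 'n cvec) \<Rightarrow> ('n cvec \<Rightarrow> 'n cvec) \<Rightarrow> 'n cvec \<Rightarrow> real" where
  "eta2 br \<sigma> X = Re (- ip br (br X (\<sigma> X)) (br X (\<sigma> X)))"

text \<open>The one-form I d rho, (I alpha)(Y) = - alpha(i Y), computed on the ambient space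
  (the orbit is a complex submanifold and I is multiplication by i).\<close>
definition Idrho :: "('n::finite cvec \<Rightarrow> 'n cvec \<Rightarrow> 'n cvec) \<Rightarrow> ('n cvec \<Rightarrow> 'n cvec) \<Rightarrow>
    (real \<times> real \<Rightarrow> real) \<Rightarrow> 'n cvec \<Rightarrow> 'n cvec \<Rightarrow> real" where
  "Idrho br \<sigma> \<rho> Y V =
     - frechet_derivative (\<lambda>Z. \<rho> (eta1 br \<sigma> Z, eta2 br \<sigma> Z)) (at Y) (\<i> *s V)"

text \<open>Exterior derivative of a one-form on a vector space:
  d alpha (U,V) = U(alpha(V)) - V(alpha(U)) for constant vector fields U, V.\<close>
definition dform :: "('n::finite cvec \<Rightarrow> 'n cvec \<Rightarrow> real) \<Rightarrow> 'n cvec \<Rightarrow> 'n cvec \<Rightarrow> 'n cvec \<Rightarrow> real" where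
  "dform \<alpha> X U V = frechet_derivative (\<lambda>Y. \<alpha> Y V) (at X) U - frechet_derivative (\<lambda>Y. \<alpha> Y U) (at X) V"

definition omega_I :: "('n::finite cvec \<Rightarrow> 'n cvec \<Rightarrow> 'n cvec) \<Rightarrow> ('n cvec \<Rightarrow> 'n cvec) \<Rightarrow>
    (real \<times> real \<Rightarrow> real) \<Rightarrow> 'n cvec \<Rightarrow> 'n cvec \<Rightarrow> 'n cvec \<Rightarrow> real" where
  "omega_I br \<sigma> \<rho> X U V = - (1/2) * dform (Idrho br \<sigma> \<rho>) X U V"

text \<open>g(xi_A, xi_B) = omega_I(I xi_A, xi_B), with xi_A = [A,X] and I xi_A = xi_{iA}.\<close>
definition gmet :: "('n::finite cvec \<Rightarrow> 'n cvec \<Rightarrow> 'n cvec) \<Rightarrow> ('n cvec \<Rightarrow> 'n cvec) \<Rightarrow>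
    (real \<times> real \<Rightarrow> real) \<Rightarrow> 'n cvec \<Rightarrow> 'n cvec \<Rightarrow> 'n cvec \<Rightarrow> real" where
  "gmet br \<sigma> \<rho> X A B = omega_I br \<sigma> \<rho> X (br (\<i> *s A) X) (br B X)"

text \<open>Kirillov-Kostant-Souriau form: omega_c(xi_A, xi_B)_X = <X,[A,B]>.\<close>
definition kks :: "('n::finite cvec \<Rightarrow> 'n cvec \<Rightarrow> 'n cvec) \<Rightarrow> 'n cvec \<Rightarrow> 'n cvec \<Rightarrow> 'n cvec \<Rightarrow> complex" where
  "kks br X A B = ip br X (br A B)"

end

theory Submission
  imports Defs
begin

text \<open>
  Put \<open>\<phi> = \<rho> \<circ> (\<eta>\<^sub>1, \<eta>\<^sub>2)\<close>. Since \<open>(I d\<phi>)\<^sub>Y(V) = - d\<phi>\<^sub>Y(i V)\<close>, the form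
  \<open>\<omega>\<^sub>I = -1/2 d I d\<phi>\<close> is \<open>\<omega>\<^sub>I(U, V) = (H(U, i V) - H(V, i U)) / 2\<close> for the real Hessian \<open>H\<close>
  of \<open>\<phi>\<close> at \<open>X\<close>. As \<open>H\<close> is symmetric, \<open>g(\<xi>\<^sub>A, V) = \<omega>\<^sub>I(i \<xi>\<^sub>A, V)\<close> is the \<open>J\<close>-invariant
  part \<open>(H(\<xi>\<^sub>A, V) + H(i \<xi>\<^sub>A, i V)) / 2\<close>. Computing \<open>H\<close> from the first and second derivatives
  of \<open>\<eta>\<^sub>1, \<eta>\<^sub>2\<close> writes this as \<open>Re \<langle>\<Psi>, V\<rangle> = - Re \<langle>[\<Psi>, X], B\<rangle>\<close> for \<open>V = \<xi>\<^sub>B\<close> and an explicit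
  \<open>\<Psi>\<close>, while \<open>Re \<omega>\<^sub>c(\<xi>\<^sub>C, \<xi>\<^sub>B) = - Re \<langle>\<xi>\<^sub>C, B\<rangle>\<close>. Because \<open>\<sigma>\<close> is a compact real structure,
  \<open>\<langle>Z, \<sigma> Z\<rangle>\<close> has positive real part for \<open>Z \<noteq> 0\<close>, so \<open>Re \<langle>-, -\<rangle>\<close> is non-degenerate and
  \<open>J \<xi>\<^sub>A = [\<Psi>, X]\<close>; the Jacobi identity brings \<open>[\<Psi>, X]\<close> into the stated form.
\<close>

section \<open>Traces of linear and conjugate-linear maps\<close>

definition conj_linear :: "('n::finite cvec \<Rightarrow> 'n cvec) \<Rightarrow> bool" where
  "conj_linear f \<longleftrightarrow> (\<forall>x y. f (x + y) = f x + f y) \<and> (\<forall>c x. f (c *s x) = cnj c *s f x)"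

definition vcnj :: "'n::finite cvec \<Rightarrow> 'n cvec" where
  "vcnj v = (\<chi> i. cnj (v $ i))"

lemma vcnj_vcnj [simp]: "vcnj (vcnj v) = v"
  by (simp add: vcnj_def vec_eq_iff)

lemma vcnj_axis [simp]: "vcnj (axis i 1) = axis i 1"
  by (simp add: vcnj_def vec_eq_iff axis_def)

lemma vcnj_add: "vcnj (x + y) = vcnj x + vcnj y"
  by (simp add: vcnj_def vec_eq_iff)

lemma vcnj_scale: "vcnj (c *s x) = cnj c *s vcnj x"
  by (simp add: vcnj_def vec_eq_iff)

lemma vec_linearI:
  fixes f :: "'a::field ^ 'n \<Rightarrow> 'a ^ 'm"
  assumes "\<And>x y. f (x + y) = f x + f y" and "\<And>c x. f (c *s x) = c *s f x"
  shows "Vector_Spaces.linear (*s) (*s) f"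
  using assms by (simp add: Vector_Spaces.linear_iff vec.vector_space_axioms)

lemma linear_vcnj_comp:
  assumes "conj_linear f"
  shows "Vector_Spaces.linear (*s) (*s) (vcnj \<circ> f)" and "Vector_Spaces.linear (*s) (*s) (f \<circ> vcnj)"
  using assms by (auto intro!: vec_linearI simp: conj_linear_def vcnj_add vcnj_scale)

lemma trace_matrix_comp_commute:
  fixes f g :: "'a::field ^ 'n \<Rightarrow> 'a ^ 'n"
  assumes "Vector_Spaces.linear (*s) (*s) f" and "Vector_Spaces.linear (*s) (*s) g"
  shows "trace (matrix (f \<circ> g)) = trace (matrix (g \<circ> f))"
  using assms by (metis matrix_compose_gen trace_mul_sym)

lemma trace_matrix_vcnj_conj: "trace (matrix (vcnj \<circ> f \<circ> vcnj)) = cnj (trace (matrix f))"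
  by (simp add: trace_def matrix_def) (simp add: vcnj_def)

lemma trace_matrix_comp_conj_linear:
  assumes "conj_linear P" and "conj_linear Q"
  shows "trace (matrix (P \<circ> Q)) = cnj (trace (matrix (Q \<circ> P)))"
proof -
  have "P \<circ> Q = vcnj \<circ> ((vcnj \<circ> P) \<circ> (Q \<circ> vcnj)) \<circ> vcnj"
    by (simp add: fun_eq_iff)
  then have "trace (matrix (P \<circ> Q)) = cnj (trace (matrix ((vcnj \<circ> P) \<circ> (Q \<circ> vcnj))))"
    by (simp only: trace_matrix_vcnj_conj)
  also have "\<dots> = cnj (trace (matrix ((Q \<circ> vcnj) \<circ> (vcnj \<circ> P))))"
    using trace_matrix_comp_commute[OF linear_vcnj_comp(1)[OF assms(1)] linear_vcnj_comp(2)[OF assms(2)]]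
    by simp
  also have "(Q \<circ> vcnj) \<circ> (vcnj \<circ> P) = Q \<circ> P"
    by (simp add: fun_eq_iff)
  finally show ?thesis .
qed

section \<open>The Killing form of a compact real form\<close>

locale compact_real_form =
  fixes br :: "'n::finite cvec \<Rightarrow> 'n cvec \<Rightarrow> 'n cvec" and \<sigma> :: "'n cvec \<Rightarrow> 'n cvec"
  assumes lie_algebra: "lie_algebra br"
    and real_structure: "compact_real_structure br \<sigma>"
begin

lemma br_add_left: "br (x + y) z = br x z + br y z"
  and br_add_right: "br x (y + z) = br x y + br x z"
  and br_scale_left: "br (c *s x) y = c *s br x y"
  and br_scale_right: "br x (c *s y) = c *s br x y"
  and br_self: "br x x = 0"
  and jacobi: "br x (br y z) + br y (br z x) + br z (br x y) = 0"
  using lie_algebra unfolding lie_algebra_def by blast+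

lemma br_minus_left: "br (- x) y = - br x y"
  using br_scale_left[of "-1" x y] by simp

lemma br_minus_right: "br x (- y) = - br x y"
  using br_scale_right[of x "-1" y] by simp

lemma br_diff_left: "br (x - y) z = br x z - br y z"
  by (simp only: diff_conv_add_uminus br_add_left br_minus_left)

lemma br_diff_right: "br x (y - z) = br x y - br x z"
  by (simp only: diff_conv_add_uminus br_add_right br_minus_right)

lemma br_anticomm: "br y x = - br x y"
proof -
  have "br x x + br y x + (br x y + br y y) = 0"
    using br_self[of "x + y"] by (simp only: br_add_left br_add_right)
  then show ?thesis
    by (simp add: br_self add_eq_0_iff2)
qed

lemma br_br_left: "br (br x y) z = br x (br y z) - br y (br x z)"
  using jacobi[of x y z] br_anticomm[of z "br x y"] br_anticomm[of z x] br_minus_right[of y "br x z"]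
  by (simp add: algebra_simps eq_neg_iff_add_eq_0)

lemma linear_br: "Vector_Spaces.linear (*s) (*s) (br x)"
  by (rule vec_linearI) (simp_all add: br_add_right br_scale_right)

lemma \<sigma>_add: "\<sigma> (x + y) = \<sigma> x + \<sigma> y"
  and \<sigma>_scale: "\<sigma> (c *s x) = cnj c *s \<sigma> x"
  and \<sigma>_\<sigma> [simp]: "\<sigma> (\<sigma> x) = x"
  and \<sigma>_br: "\<sigma> (br x y) = br (\<sigma> x) (\<sigma> y)"
  and killing_real_form_neg: "\<sigma> A = A \<Longrightarrow> A \<noteq> 0 \<Longrightarrow> Re (killing br A A) < 0"
  using real_structure unfolding compact_real_structure_def by blast+

lemma \<sigma>_minus: "\<sigma> (- x) = - \<sigma> x"
  using \<sigma>_scale[of "-1" x] by simp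

lemma \<sigma>_diff: "\<sigma> (x - y) = \<sigma> x - \<sigma> y"
  by (simp only: diff_conv_add_uminus \<sigma>_add \<sigma>_minus)

lemma conj_linear_\<sigma>: "conj_linear \<sigma>"
  by (simp add: conj_linear_def \<sigma>_add \<sigma>_scale)

lemma killing_eq_trace: "killing br A B = trace (matrix (br A \<circ> br B))"
  by (simp add: killing_def trace_def matrix_def)

lemma killing_commute: "killing br A B = killing br B A"
  unfolding killing_eq_trace by (rule trace_matrix_comp_commute[OF linear_br linear_br])

lemma killing_invariant: "killing br (br A B) C = killing br A (br B C)"
proof -
  have trace_diff: "trace (matrix (\<lambda>v. f v - g v)) = trace (matrix f) - trace (matrix g)"
    for f g :: "'n cvec \<Rightarrow> 'n cvec"
    by (simp add: trace_def matrix_def sum_subtractf)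
  have "trace (matrix (br B \<circ> (br A \<circ> br C))) = trace (matrix ((br A \<circ> br C) \<circ> br B))"
    by (rule trace_matrix_comp_commute[OF linear_br Vector_Spaces.linear_compose[OF linear_br linear_br]])
  then show ?thesis
    unfolding killing_eq_trace by (simp add: o_def br_br_left br_diff_right trace_diff)
qed

lemma killing_\<sigma>: "killing br (\<sigma> A) (\<sigma> B) = cnj (killing br A B)"
proof -
  have conj_linear_ad_\<sigma>: "conj_linear (br A \<circ> br B \<circ> \<sigma>)"
    by (simp add: conj_linear_def \<sigma>_add \<sigma>_scale br_add_right br_scale_right)
  have "br (\<sigma> A) \<circ> br (\<sigma> B) = \<sigma> \<circ> (br A \<circ> br B \<circ> \<sigma>)"
    by (simp add: fun_eq_iff \<sigma>_br)
  then have "killing br (\<sigma> A) (\<sigma> B) = cnj (trace (matrix ((br A \<circ> br B \<circ> \<sigma>) \<circ> \<sigma>)))"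
    unfolding killing_eq_trace by (simp only: trace_matrix_comp_conj_linear[OF conj_linear_\<sigma> conj_linear_ad_\<sigma>])
  also have "(br A \<circ> br B \<circ> \<sigma>) \<circ> \<sigma> = br A \<circ> br B"
    by (simp add: fun_eq_iff)
  finally show ?thesis
    by (simp only: killing_eq_trace)
qed

lemma ip_add_left: "ip br (x + y) z = ip br x z + ip br y z"
  by (simp add: ip_def killing_def br_add_left sum.distrib)

lemma ip_add_right: "ip br x (y + z) = ip br x y + ip br x z"
  by (simp add: ip_def killing_def br_add_left br_add_right sum.distrib)

lemma ip_scale_left: "ip br (c *s x) y = c * ip br x y"
  by (simp add: ip_def killing_def br_scale_left sum_distrib_left)

lemma ip_scale_right: "ip br x (c *s y) = c * ip br x y"
  by (simp add: ip_def killing_def br_scale_left br_scale_right sum_distrib_left)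

lemma ip_commute: "ip br x y = ip br y x"
  by (simp add: ip_def killing_commute)

lemma ip_invariant: "ip br (br x y) z = ip br x (br y z)"
  by (simp add: ip_def killing_invariant)

lemma ip_\<sigma>: "ip br (\<sigma> x) (\<sigma> y) = cnj (ip br x y)"
  by (simp add: ip_def killing_\<sigma>)

lemma ip_zero_left [simp]: "ip br 0 y = 0"
  using ip_scale_left[of 0 0 y] by simp

lemma ip_minus_left: "ip br (- x) y = - ip br x y"
  using ip_scale_left[of "-1" x y] by simp

lemma ip_minus_right: "ip br x (- y) = - ip br x y"
  using ip_scale_right[of x "-1" y] by simp

lemma ip_diff_left: "ip br (x - y) z = ip br x z - ip br y z"
  by (simp only: diff_conv_add_uminus ip_add_left ip_minus_left)

lemma ip_diff_right: "ip br x (y - z) = ip br x y - ip br x z"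
  by (simp only: diff_conv_add_uminus ip_add_right ip_minus_right)

lemma ip_\<sigma>_pos:
  assumes "Z \<noteq> 0"
  shows "Re (ip br Z (\<sigma> Z)) > 0"
proof -
  have pos: "A \<noteq> 0 \<Longrightarrow> Re (ip br A A) > 0" if "\<sigma> A = A" for A
    using killing_real_form_neg[OF that] by (simp add: ip_def)
  define A where "A = (1/2 :: complex) *s (Z + \<sigma> Z)"
  define B where "B = (- \<i>/2) *s (Z - \<sigma> Z)"
  have \<sigma>A: "\<sigma> A = A" unfolding A_def by (simp add: \<sigma>_scale \<sigma>_add vec_eq_iff)
  have \<sigma>B: "\<sigma> B = B" unfolding B_def by (simp add: \<sigma>_scale \<sigma>_diff vec_eq_iff algebra_simps)
  have Z: "Z = A + \<i> *s B" and \<sigma>Z: "\<sigma> Z = A - \<i> *s B"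
    unfolding A_def B_def by (simp_all add: vec_eq_iff algebra_simps)
  have "ip br Z (\<sigma> Z) = ip br A A + ip br B B"
    unfolding \<sigma>Z by (subst Z) (simp add: ip_add_left ip_diff_right ip_scale_left ip_scale_right ip_commute[of B A] algebra_simps)
  moreover have "A \<noteq> 0 \<or> B \<noteq> 0"
    using assms Z by auto
  ultimately show ?thesis
    using pos[OF \<sigma>A] pos[OF \<sigma>B] by (cases "A = 0"; cases "B = 0") auto
qed

lemma ip_nondegenerate:
  assumes "\<And>B. Re (ip br D B) = 0"
  shows "D = 0"
  using assms[of "\<sigma> D"] ip_\<sigma>_pos[of D] by force

section \<open>Derivatives of the invariants\<close>

lemma Re_ip_\<sigma>_commute: "Re (ip br x (\<sigma> y)) = Re (ip br y (\<sigma> x))"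
proof -
  have "ip br x (\<sigma> y) = cnj (ip br (\<sigma> x) y)"
    using ip_\<sigma>[of "\<sigma> x" y] by simp
  then show ?thesis
    by (simp add: ip_commute)
qed

lemma scaleR_eq_scale: "r *\<^sub>R (v :: 'n cvec) = complex_of_real r *s v"
  unfolding vec_eq_iff by (simp add: scaleR_conv_of_real[where 'a=complex])

lemma bounded_linear_\<sigma>: "bounded_linear \<sigma>"
proof -
  have "linear \<sigma>"
    by (rule linearI) (simp_all add: \<sigma>_add \<sigma>_scale scaleR_eq_scale)
  then show ?thesis
    by (simp add: linear_conv_bounded_linear)
qed

lemma bounded_bilinear_br: "bounded_bilinear br"
  by (rule bilinear_conv_bounded_bilinear[THEN iffD1])
    (auto simp: bilinear_def intro!: linearI simp: br_add_left br_add_right br_scale_left br_scale_right scaleR_eq_scale)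

lemma bounded_bilinear_ip: "bounded_bilinear (\<lambda>x y. ip br x y)"
  by (rule bilinear_conv_bounded_bilinear[THEN iffD1])
    (auto simp: bilinear_def intro!: linearI simp: ip_add_left ip_add_right ip_scale_left ip_scale_right scaleR_eq_scale scaleR_conv_of_real)

definition eta :: "'n cvec \<Rightarrow> real \<times> real" where
  "eta Y = (eta1 br \<sigma> Y, eta2 br \<sigma> Y)"

definition eta1' :: "'n cvec \<Rightarrow> 'n cvec \<Rightarrow> real" where
  "eta1' X h = 2 * Re (ip br h (\<sigma> X))"

definition eta2' :: "'n cvec \<Rightarrow> 'n cvec \<Rightarrow> real" where
  "eta2' X h = -4 * Re (ip br h (br (\<sigma> X) (br X (\<sigma> X))))"

definition eta2'' :: "'n cvec \<Rightarrow> 'n cvec \<Rightarrow> 'n cvec \<Rightarrow> real" where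
  "eta2'' X U h =
     -4 * Re (ip br h (br (\<sigma> U) (br X (\<sigma> X)) + br (\<sigma> X) (br U (\<sigma> X) + br X (\<sigma> U))))"

lemma has_derivative_\<sigma>: "(\<sigma> has_derivative \<sigma>) F"
  by (rule bounded_linear_imp_has_derivative[OF bounded_linear_\<sigma>])

lemma has_derivative_eta1: "(eta1 br \<sigma> has_derivative eta1' X) (at X)"
proof -
  have "((\<lambda>Y. Re (ip br Y (\<sigma> Y))) has_derivative (\<lambda>h. Re (ip br X (\<sigma> h) + ip br h (\<sigma> X)))) (at X)"
    by (intro bounded_linear.has_derivative[OF bounded_linear_Re]
          bounded_bilinear.FDERIV[OF bounded_bilinear_ip has_derivative_ident has_derivative_\<sigma>])
  moreover have "(\<lambda>h. Re (ip br X (\<sigma> h) + ip br h (\<sigma> X))) = eta1' X"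
    by (simp add: fun_eq_iff eta1'_def Re_ip_\<sigma>_commute[of X])
  ultimately show ?thesis
    unfolding eta1_def[abs_def] by simp
qed

lemma has_derivative_eta2: "(eta2 br \<sigma> has_derivative eta2' X) (at X)"
proof -
  define W where "W = br X (\<sigma> X)"
  have dW: "((\<lambda>Y. br Y (\<sigma> Y)) has_derivative (\<lambda>h. br X (\<sigma> h) + br h (\<sigma> X))) (at X)"
    by (rule bounded_bilinear.FDERIV[OF bounded_bilinear_br has_derivative_ident has_derivative_\<sigma>])
  have "((\<lambda>Y. Re (- ip br (br Y (\<sigma> Y)) (br Y (\<sigma> Y)))) has_derivative
      (\<lambda>h. Re (- (ip br W (br X (\<sigma> h) + br h (\<sigma> X)) + ip br (br X (\<sigma> h) + br h (\<sigma> X)) W)))) (at X)"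
    unfolding W_def
    by (intro bounded_linear.has_derivative[OF bounded_linear_Re] has_derivative_minus
          bounded_bilinear.FDERIV[OF bounded_bilinear_ip dW dW])
  moreover have "Re (ip br (br X (\<sigma> h)) W) = Re (ip br h (br (\<sigma> X) W))" for h
  proof -
    have "cnj (ip br (br X (\<sigma> h)) W) = ip br (br h (\<sigma> X)) W"
      by (simp add: W_def ip_\<sigma>[symmetric] \<sigma>_br br_anticomm[of "\<sigma> X"] ip_minus_left ip_minus_right)
    then show ?thesis
      by (metis cnj.sel(1) ip_invariant)
  qed
  then have "(\<lambda>h. Re (- (ip br W (br X (\<sigma> h) + br h (\<sigma> X)) + ip br (br X (\<sigma> h) + br h (\<sigma> X)) W))) = eta2' X"
    by (simp add: fun_eq_iff eta2'_def W_def[symmetric] ip_commute[of W] ip_add_left ip_invariant[of _ "\<sigma> X"])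
  ultimately show ?thesis
    unfolding eta2_def[abs_def] by simp
qed

lemma has_derivative_eta: "(eta has_derivative (\<lambda>h. (eta1' X h, eta2' X h))) (at X)"
  unfolding eta_def[abs_def] by (rule has_derivative_Pair[OF has_derivative_eta1 has_derivative_eta2])

lemma has_derivative_comp_eta:
  assumes "(f has_derivative (\<lambda>(s, t). a * s + b * t)) (at (eta X))"
  shows "((\<lambda>Y. f (eta Y)) has_derivative (\<lambda>h. a * eta1' X h + b * eta2' X h)) (at X)"
  using diff_chain_at[OF has_derivative_eta assms] by (simp add: o_def)

lemma has_derivative_eta1': "((\<lambda>Y. eta1' Y h) has_derivative (\<lambda>U. eta1' U h)) (at X)"
proof -
  have "((\<lambda>Y. ip br h (\<sigma> Y)) has_derivative (\<lambda>U. ip br h (\<sigma> U) + ip br 0 (\<sigma> X))) (at X)"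
    by (rule bounded_bilinear.FDERIV[OF bounded_bilinear_ip has_derivative_const has_derivative_\<sigma>])
  from has_derivative_mult_right[OF bounded_linear.has_derivative[OF bounded_linear_Re this], of 2]
  show ?thesis
    by (simp add: eta1'_def)
qed

lemma has_derivative_eta2': "((\<lambda>Y. eta2' Y h) has_derivative (\<lambda>U. eta2'' X U h)) (at X)"
proof -
  have dW: "((\<lambda>Y. br Y (\<sigma> Y)) has_derivative (\<lambda>U. br X (\<sigma> U) + br U (\<sigma> X))) (at X)"
    by (rule bounded_bilinear.FDERIV[OF bounded_bilinear_br has_derivative_ident has_derivative_\<sigma>])
  have "((\<lambda>Y. ip br h (br (\<sigma> Y) (br Y (\<sigma> Y)))) has_derivative
      (\<lambda>U. ip br h (br (\<sigma> X) (br X (\<sigma> U) + br U (\<sigma> X)) + br (\<sigma> U) (br X (\<sigma> X)))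
         + ip br 0 (br (\<sigma> X) (br X (\<sigma> X))))) (at X)"
    by (intro bounded_bilinear.FDERIV[OF bounded_bilinear_ip has_derivative_const]
          bounded_bilinear.FDERIV[OF bounded_bilinear_br has_derivative_\<sigma> dW])
  from has_derivative_mult_right[OF bounded_linear.has_derivative[OF bounded_linear_Re this], of "-4"]
  show ?thesis
    by (simp add: eta2'_def eta2''_def add.commute)
qed

lemma Idrho_eq:
  assumes "(\<rho> has_derivative (\<lambda>(s, t). a * s + b * t)) (at (eta Y))"
  shows "Idrho br \<sigma> \<rho> Y V = - (a * eta1' Y (\<i> *s V) + b * eta2' Y (\<i> *s V))"
  using frechet_derivative_at[OF has_derivative_comp_eta[OF assms], symmetric]
  by (simp add: Idrho_def eta_def)

lemma eta1'_commute: "eta1' U h = eta1' h U"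
  by (simp add: eta1'_def Re_ip_\<sigma>_commute)

lemma eta2''_commute: "eta2'' X U h = eta2'' X h U"
proof -
  define W where "W = br X (\<sigma> X)"
  have a: "Re (ip br h (br (\<sigma> U) W)) = Re (ip br U (br (\<sigma> h) W))" for h U
  proof -
    have "ip br h (br (\<sigma> U) W) = ip br (br h (\<sigma> U)) W"
      by (rule ip_invariant[symmetric])
    also have "\<dots> = - ip br (\<sigma> U) (br h W)"
      by (simp add: br_anticomm[of h] ip_minus_left ip_invariant)
    also have "\<dots> = - ip br (br h W) (\<sigma> U)"
      by (simp only: ip_commute[of "\<sigma> U"])
    finally have "Re (ip br h (br (\<sigma> U) W)) = - Re (ip br U (\<sigma> (br h W)))"
      by (simp add: Re_ip_\<sigma>_commute)
    also have "\<sigma> (br h W) = - br (\<sigma> h) W"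
      by (simp add: W_def \<sigma>_br br_anticomm[of "\<sigma> X"] br_minus_right)
    finally show ?thesis
      by (simp add: ip_minus_right)
  qed
  have b: "ip br h (br (\<sigma> X) (br U (\<sigma> X))) = ip br U (br (\<sigma> X) (br h (\<sigma> X)))" for h U
  proof -
    have "ip br h (br (\<sigma> X) (br U (\<sigma> X))) = ip br (br h (\<sigma> X)) (br U (\<sigma> X))"
      by (rule ip_invariant[symmetric])
    also have "\<dots> = ip br (br U (\<sigma> X)) (br h (\<sigma> X))"
      by (rule ip_commute)
    finally show ?thesis
      by (simp only: ip_invariant)
  qed
  have c: "Re (ip br h (br (\<sigma> X) (br X (\<sigma> U)))) = Re (ip br U (br (\<sigma> X) (br X (\<sigma> h))))" for h U
  proof -
    have "ip br h (br (\<sigma> X) (br X (\<sigma> U))) = ip br (br (br h (\<sigma> X)) X) (\<sigma> U)"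
      by (simp only: ip_invariant)
    then have "Re (ip br h (br (\<sigma> X) (br X (\<sigma> U)))) = Re (ip br U (br (br (\<sigma> h) X) (\<sigma> X)))"
      by (simp add: Re_ip_\<sigma>_commute[of _ U] \<sigma>_br)
    also have "br (br (\<sigma> h) X) (\<sigma> X) = br (\<sigma> X) (br X (\<sigma> h))"
      by (simp add: br_anticomm[of _ "\<sigma> X"] br_anticomm[of "\<sigma> h"] br_minus_right)
    finally show ?thesis .
  qed
  show ?thesis
    unfolding eta2''_def W_def[symmetric]
    using a[of h U] b[of h U] c[of h U] by (simp add: ip_add_right br_add_right)
qed

lemma Re_ip_rotate:
  "c * Re (ip br a P) * (d * Re (ip br V Q)) + c * Re (ip br (\<i> *s a) P) * (d * Re (ip br (\<i> *s V) Q))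
     = c * d * Re (cnj (ip br a P) * ip br V Q)"
  by (simp add: ip_scale_left algebra_simps)

lemma eta1'_rotate: "eta1' a V + eta1' (\<i> *s a) (\<i> *s V) = 4 * Re (ip br (\<sigma> a) V)"
  by (simp add: eta1'_def \<sigma>_scale ip_scale_left ip_scale_right ip_minus_left ip_commute[of V])

lemma eta2''_rotate:
  "eta2'' X a V + eta2'' X (\<i> *s a) (\<i> *s V)
     = -8 * Re (ip br V (br (\<sigma> X) (br X (\<sigma> a)) + br (\<sigma> a) (br X (\<sigma> X))))"
  by (simp add: eta2''_def \<sigma>_scale br_scale_left br_scale_right br_add_right ip_add_right
      br_minus_left br_minus_right br_diff_right ip_diff_right ip_scale_left ip_scale_right algebra_simps)

lemma kks_eq: "kks br X C B = - ip br (br C X) B"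
  by (simp add: kks_def ip_invariant[symmetric] br_anticomm[of X] ip_minus_left)

end

section \<open>The metric of the potential \<open>\<rho>(\<eta>\<^sub>1, \<eta>\<^sub>2)\<close>\<close>

locale kahler_potential = compact_real_form br \<sigma>
  for br :: "'n::finite cvec \<Rightarrow> 'n cvec \<Rightarrow> 'n cvec" and \<sigma> +
  fixes \<rho> \<rho>1 \<rho>2 \<rho>11 \<rho>12 \<rho>22 :: "real \<times> real \<Rightarrow> real"
    and \<Omega> :: "(real \<times> real) set"
    and X :: "'n cvec"
  assumes open_\<Omega>: "open \<Omega>"
    and eta_X_in: "eta X \<in> \<Omega>"
    and d\<rho>: "\<And>p. p \<in> \<Omega> \<Longrightarrow> (\<rho> has_derivative (\<lambda>(s, t). \<rho>1 p * s + \<rho>2 p * t)) (at p)"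
    and d\<rho>1: "\<And>p. p \<in> \<Omega> \<Longrightarrow> (\<rho>1 has_derivative (\<lambda>(s, t). \<rho>11 p * s + \<rho>12 p * t)) (at p)"
    and d\<rho>2: "\<And>p. p \<in> \<Omega> \<Longrightarrow> (\<rho>2 has_derivative (\<lambda>(s, t). \<rho>12 p * s + \<rho>22 p * t)) (at p)"
begin

definition hessian :: "'n cvec \<Rightarrow> 'n cvec \<Rightarrow> real" where
  "hessian U h =
     \<rho>1 (eta X) * eta1' U h + \<rho>2 (eta X) * eta2'' X U h
     + \<rho>11 (eta X) * eta1' X U * eta1' X h
     + \<rho>12 (eta X) * (eta1' X U * eta2' X h + eta2' X U * eta1' X h)
     + \<rho>22 (eta X) * eta2' X U * eta2' X h"

lemma hessian_commute: "hessian U h = hessian h U"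
  by (simp add: hessian_def eta1'_commute[of U] eta2''_commute[of X U] algebra_simps)

lemma hessian_minus_right: "hessian U (- h) = - hessian U h"
  by (simp add: hessian_def eta1'_def eta2'_def eta2''_def ip_minus_left algebra_simps)

lemma has_derivative_Idrho:
  "((\<lambda>Y. Idrho br \<sigma> \<rho> Y V) has_derivative (\<lambda>U. - hessian U (\<i> *s V))) (at X)"
proof -
  define N where "N = eta -` \<Omega>"
  have "open N"
    unfolding N_def
    using continuous_open_vimage[OF open_\<Omega> has_derivative_continuous[OF has_derivative_eta]] .
  have "((\<lambda>Y. - (\<rho>1 (eta Y) * eta1' Y (\<i> *s V) + \<rho>2 (eta Y) * eta2' Y (\<i> *s V))) has_derivative
      (\<lambda>U. - ((\<rho>1 (eta X) * eta1' U (\<i> *s V)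
                 + (\<rho>11 (eta X) * eta1' X U + \<rho>12 (eta X) * eta2' X U) * eta1' X (\<i> *s V))
               + (\<rho>2 (eta X) * eta2'' X U (\<i> *s V)
                 + (\<rho>12 (eta X) * eta1' X U + \<rho>22 (eta X) * eta2' X U) * eta2' X (\<i> *s V))))) (at X)"
    by (intro has_derivative_minus has_derivative_add has_derivative_mult has_derivative_comp_eta
          d\<rho>1 d\<rho>2 eta_X_in has_derivative_eta1' has_derivative_eta2')
  then have "((\<lambda>Y. - (\<rho>1 (eta Y) * eta1' Y (\<i> *s V) + \<rho>2 (eta Y) * eta2' Y (\<i> *s V))) has_derivative
      (\<lambda>U. - hessian U (\<i> *s V))) (at X)"
    by (rule has_derivative_eq_rhs) (simp add: fun_eq_iff hessian_def algebra_simps)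
  then show ?thesis
  proof (rule has_derivative_transform_within_open[OF _ \<open>open N\<close>])
    show "X \<in> N"
      using eta_X_in by (simp add: N_def)
    show "- (\<rho>1 (eta Y) * eta1' Y (\<i> *s V) + \<rho>2 (eta Y) * eta2' Y (\<i> *s V)) = Idrho br \<sigma> \<rho> Y V"
      if "Y \<in> N" for Y
      using Idrho_eq[OF d\<rho>] that by (simp add: N_def)
  qed
qed

lemma omega_I_eq: "omega_I br \<sigma> \<rho> X U V = (hessian U (\<i> *s V) - hessian V (\<i> *s U)) / 2"
  using frechet_derivative_at[OF has_derivative_Idrho, symmetric]
  by (simp add: omega_I_def dform_def) argo

lemma gmet_eq_hessian:
  "gmet br \<sigma> \<rho> X A B = (hessian (br A X) (br B X) + hessian (\<i> *s br A X) (\<i> *s br B X)) / 2"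
proof -
  have "\<i> *s (\<i> *s br A X) = - br A X"
    by (simp add: vec_eq_iff)
  then show ?thesis
    by (simp add: gmet_def omega_I_eq br_scale_left hessian_minus_right hessian_commute[of "br B X"])
qed

text \<open>With \<open>a = \<xi>\<^sub>A\<close>, this is the element \<open>\<Psi>\<close> with \<open>J \<xi>\<^sub>A = [\<Psi>, X]\<close>.\<close>

definition J_lift :: "'n cvec \<Rightarrow> 'n cvec" where
  "J_lift a =
     (let p = eta X; N = br (\<sigma> X) (br X (\<sigma> X)) in
        complex_of_real (2 * \<rho>1 p) *s \<sigma> a
      - complex_of_real (4 * \<rho>2 p) *s (br (\<sigma> X) (br X (\<sigma> a)) + br (\<sigma> a) (br X (\<sigma> X)))
      + (complex_of_real (2 * \<rho>11 p) * cnj (ip br a (\<sigma> X))) *s \<sigma> X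
      - complex_of_real (4 * \<rho>12 p) *s (cnj (ip br a N) *s \<sigma> X + cnj (ip br a (\<sigma> X)) *s N)
      + (complex_of_real (8 * \<rho>22 p) * cnj (ip br a N)) *s N)"

lemma hessian_J_invariant_part:
  "(hessian a V + hessian (\<i> *s a) (\<i> *s V)) / 2 = Re (ip br (J_lift a) V)"
proof -
  define p where "p = eta X"
  have "hessian a V + hessian (\<i> *s a) (\<i> *s V)
      = \<rho>1 p * (eta1' a V + eta1' (\<i> *s a) (\<i> *s V))
      + \<rho>2 p * (eta2'' X a V + eta2'' X (\<i> *s a) (\<i> *s V))
      + \<rho>11 p * (eta1' X a * eta1' X V + eta1' X (\<i> *s a) * eta1' X (\<i> *s V))
      + \<rho>12 p * ((eta1' X a * eta2' X V + eta1' X (\<i> *s a) * eta2' X (\<i> *s V))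
                  + (eta2' X a * eta1' X V + eta2' X (\<i> *s a) * eta1' X (\<i> *s V)))
      + \<rho>22 p * (eta2' X a * eta2' X V + eta2' X (\<i> *s a) * eta2' X (\<i> *s V))"
    by (simp add: hessian_def p_def algebra_simps)
  also have "\<dots> = 2 * Re (ip br (J_lift a) V)"
    unfolding eta1'_rotate eta2''_rotate eta1'_def[of X] eta2'_def Re_ip_rotate
    by (simp add: J_lift_def Let_def p_def ip_commute[of _ V] ip_add_right ip_diff_right ip_scale_right algebra_simps)
  finally show ?thesis
    by simp
qed

lemma gmet_eq_J_lift: "gmet br \<sigma> \<rho> X A B = - Re (ip br (br (J_lift (br A X)) X) B)"
proof -
  have "ip br (J_lift (br A X)) (br B X) = - ip br (br (J_lift (br A X)) X) B"
    by (simp add: ip_commute[of _ "br B X"] ip_invariant br_anticomm[of B] ip_minus_left ip_minus_right)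
  then show ?thesis
    using hessian_J_invariant_part by (simp add: gmet_eq_hessian)
qed

lemma bracket_eq_J_lift:
  assumes "\<And>B. gmet br \<sigma> \<rho> X A B = Re (kks br X C B)"
  shows "br C X = br (J_lift (br A X)) X"
proof -
  have "Re (ip br (br C X - br (J_lift (br A X)) X) B) = 0" for B
    using assms[of B] by (simp add: gmet_eq_J_lift kks_eq ip_diff_left)
  then show ?thesis
    using ip_nondegenerate by force
qed

lemma bracket_J_lift:
  "br (J_lift a) X =
     (let p = eta X; S = \<sigma> a; sX = \<sigma> X in
       complex_of_real (- 2 * \<rho>1 p) *s br X S
     + complex_of_real (4 * \<rho>2 p) *s (2 *s br X (br sX (br X S)) - br X (br X (br sX S)))
     - (complex_of_real (2 * \<rho>11 p) * ip br S X) *s br X sX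
     + complex_of_real (4 * \<rho>12 p) *s
         (ip br S (br X (br sX X)) *s br X sX + ip br S X *s br X (br sX (br X sX)))
     - (complex_of_real (8 * \<rho>22 p) * ip br S (br X (br sX X))) *s br X (br sX (br X sX)))"
proof -
  define N where "N = br (\<sigma> X) (br X (\<sigma> X))"
  have jacobi_X: "br X (br (\<sigma> X) (\<sigma> a)) = br (\<sigma> X) (br X (\<sigma> a)) - br (\<sigma> a) (br X (\<sigma> X))"
    using br_br_left[of X "\<sigma> X" "\<sigma> a"] br_anticomm[of "br X (\<sigma> X)" "\<sigma> a"] by (simp add: algebra_simps)
  have cnj1: "cnj (ip br a (\<sigma> X)) = ip br (\<sigma> a) X"
    using ip_\<sigma>[of a "\<sigma> X"] by simp
  have cnj2: "cnj (ip br a N) = ip br (\<sigma> a) (br X (br (\<sigma> X) X))"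
    using ip_\<sigma>[of a N] by (simp add: N_def \<sigma>_br)
  show ?thesis
    unfolding J_lift_def Let_def N_def[symmetric]
    by (simp add: cnj1 cnj2 jacobi_X br_add_left br_diff_left br_scale_left br_add_right br_diff_right
        br_scale_right br_anticomm[of _ X] vec_eq_iff algebra_simps)
qed

end

theorem mainTheorem2:
  fixes br :: "'n::finite cvec \<Rightarrow> 'n cvec \<Rightarrow> 'n cvec"
    and \<sigma> :: "'n cvec \<Rightarrow> 'n cvec"
    and X :: "'n cvec"
    and \<rho> :: "real \<times> real \<Rightarrow> real"
    and \<rho>1 \<rho>2 \<rho>11 \<rho>12 \<rho>22 :: "real \<times> real \<Rightarrow> real"
    and \<Omega> :: "(real \<times> real) set"
    and J :: "'n cvec \<Rightarrow> 'n cvec"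
  assumes ss: "semisimple br"
    and sig: "compact_real_structure br \<sigma>"
    and nilp: "nilpotent_elt br X"
    and \<Omega>: "open \<Omega>" "(eta1 br \<sigma> X, eta2 br \<sigma> X) \<in> \<Omega>"
    and d\<rho>: "\<And>p. p \<in> \<Omega> \<Longrightarrow>
              (\<rho> has_derivative (\<lambda>(h, k). \<rho>1 p * h + \<rho>2 p * k)) (at p)"
    and d\<rho>1: "\<And>p. p \<in> \<Omega> \<Longrightarrow>
              (\<rho>1 has_derivative (\<lambda>(h, k). \<rho>11 p * h + \<rho>12 p * k)) (at p)"
    and d\<rho>2: "\<And>p. p \<in> \<Omega> \<Longrightarrow>
              (\<rho>2 has_derivative (\<lambda>(h, k). \<rho>12 p * h + \<rho>22 p * k)) (at p)"
    and nondeg: "\<And>A. (\<forall>B. gmet br \<sigma> \<rho> X A B = 0) \<Longrightarrow> br A X = 0"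
    and J_tangent: "\<And>A. \<exists>C. J (br A X) = br C X"
    and J_def: "\<And>A B C. J (br A X) = br C X \<Longrightarrow>
                  gmet br \<sigma> \<rho> X A B = Re (kks br X C B)"
  shows "\<forall>A. let p = (eta1 br \<sigma> X, eta2 br \<sigma> X); S = \<sigma> (br A X); sX = \<sigma> X in
     J (br A X) =
       complex_of_real (- 2 * \<rho>1 p) *s br X S
     + complex_of_real (4 * \<rho>2 p) *s (2 *s br X (br sX (br X S)) - br X (br X (br sX S)))
     - (complex_of_real (2 * \<rho>11 p) * ip br S X) *s br X sX
     + complex_of_real (4 * \<rho>12 p) *s
         (ip br S (br X (br sX X)) *s br X sX + ip br S X *s br X (br sX (br X sX)))
     - (complex_of_real (8 * \<rho>22 p) * ip br S (br X (br sX X))) *s br X (br sX (br X sX))"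
proof -
  interpret compact_real_form br \<sigma>
    using ss sig by unfold_locales (simp_all add: semisimple_def)
  interpret kahler_potential br \<sigma> \<rho> \<rho>1 \<rho>2 \<rho>11 \<rho>12 \<rho>22 \<Omega> X
    using \<Omega> d\<rho> d\<rho>1 d\<rho>2 by unfold_locales (simp_all add: eta_def)
  have "J (br A X) = br (J_lift (br A X)) X" for A
  proof -
    obtain C where C: "J (br A X) = br C X"
      using J_tangent by blast
    with bracket_eq_J_lift[OF J_def[OF C]] show ?thesis
      by simp
  qed
  then show ?thesis
    by (simp add: bracket_J_lift eta_def Let_def)
qed

end
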